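(* Let $G=(V,E)$ be a finite, undirected, connected, vertex-transitive graph with unit edge weights and vertex set $V=\{v_1,\dots,v_N\}$, let $L=D-A$ be its graph Laplacian, and let $\phi_{\lambda_1},\dots,\phi_{\lambda_N}$ be an orthonormal basis of $\mathbb{C}^N$ of eigenvectors of $L$. For $t\ge 0$ let $H_t=e^{-tL}$, $D_i(t)=\operatorname{diag}(H_t(\cdot,v_i))$ and $\psi_{ij}(t)=D_i(t)\phi_{\lambda_j}$. Then for every $t\in[0,\infty)$ the family $\{\psi_{ij}(t)\}_{i,j=1}^N$ is a tight frame for $\mathbb{C}^N$.
   Context: $L=D-A$ with $A$ the adjacency matrix and $D$ the diagonal degree matrix. $H_t(\cdot,v_i)$ is the $i$-th column of $H_t$ and $\operatorname{diag}(x)$ the diagonal matrix with diagonal $x$. An automorphism of $G$ is a permutation $\pi$ of $V$ with $(u,v)\in E$ iff $(\pi(u),\pi(v))\in E$; $G$ is vertex-transitive if for all $u,v\in V$ there is an automorphism $\pi$ with $\pi(u)=v$. A frame $\{\psi_k\}$ for $\mathbb{C}^N$ is tight if there is $A>0$ with $\sum_k|\langle f,\psi_k\rangle|^2=A\|f\|^2$ for all $f\in\mathbb{C}^N$. *)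

theory Defs
  imports "HOL-Analysis.Analysis"
begin

definition simple_graph :: "('n \<Rightarrow> 'n \<Rightarrow> bool) \<Rightarrow> bool" where
  "simple_graph E \<longleftrightarrow> (\<forall>u v. E u v \<longrightarrow> E v u) \<and> (\<forall>u. \<not> E u u)"

definition graph_connected :: "('n \<Rightarrow> 'n \<Rightarrow> bool) \<Rightarrow> bool" where
  "graph_connected E \<longleftrightarrow> (\<forall>u v. E\<^sup>*\<^sup>* u v)"

definition graph_automorphism :: "('n \<Rightarrow> 'n \<Rightarrow> bool) \<Rightarrow> ('n \<Rightarrow> 'n) \<Rightarrow> bool" where
  "graph_automorphism E \<pi> \<longleftrightarrow> bij \<pi> \<and> (\<forall>u v. E u v \<longleftrightarrow> E (\<pi> u) (\<pi> v))"

definition vertex_transitive :: "('n \<Rightarrow> 'n \<Rightarrow> bool) \<Rightarrow> bool" where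
  "vertex_transitive E \<longleftrightarrow> (\<forall>u v. \<exists>\<pi>. graph_automorphism E \<pi> \<and> \<pi> u = v)"

definition adj_matrix :: "('n::finite \<Rightarrow> 'n \<Rightarrow> bool) \<Rightarrow> real^'n^'n" where
  "adj_matrix E = (\<chi> u v. if E u v then 1 else 0)"

definition deg_matrix :: "('n::finite \<Rightarrow> 'n \<Rightarrow> bool) \<Rightarrow> real^'n^'n" where
  "deg_matrix E = (\<chi> u v. if u = v then real (card {w. E u w}) else 0)"

definition laplacian :: "('n::finite \<Rightarrow> 'n \<Rightarrow> bool) \<Rightarrow> real^'n^'n" where
  "laplacian E = deg_matrix E - adj_matrix E"

primrec mat_pow :: "real^'n^'n \<Rightarrow> nat \<Rightarrow> real^'n^'n" where
  "mat_pow A 0 = mat 1"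
| "mat_pow A (Suc k) = A ** mat_pow A k"

definition mat_exp :: "real^'n^'n \<Rightarrow> real^'n^'n" where
  "mat_exp A = (\<Sum>k. (1 / fact k) *\<^sub>R mat_pow A k)"

definition heat_kernel :: "('n::finite \<Rightarrow> 'n \<Rightarrow> bool) \<Rightarrow> real \<Rightarrow> real^'n^'n" where
  "heat_kernel E t = mat_exp ((- t) *\<^sub>R laplacian E)"

definition cinner :: "complex^'n \<Rightarrow> complex^'n \<Rightarrow> complex" where
  "cinner f g = (\<Sum>k\<in>UNIV. f $ k * cnj (g $ k))"

definition cnorm :: "complex^'n \<Rightarrow> real" where
  "cnorm f = sqrt (\<Sum>k\<in>UNIV. (cmod (f $ k))\<^sup>2)"

definition cmat_vec :: "real^'n^'m \<Rightarrow> complex^'n \<Rightarrow> complex^'m" where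
  "cmat_vec M x = (\<chi> i. \<Sum>j\<in>UNIV. complex_of_real (M $ i $ j) * x $ j)"

definition diag_vec :: "real^'n \<Rightarrow> real^'n^'n" where
  "diag_vec x = (\<chi> i j. if i = j then x $ i else 0)"

definition column :: "real^'n^'m \<Rightarrow> 'n \<Rightarrow> real^'m" where
  "column M j = (\<chi> i. M $ i $ j)"

definition orthonormal_basis :: "('n::finite \<Rightarrow> complex^'n) \<Rightarrow> bool" where
  "orthonormal_basis \<phi> \<longleftrightarrow> (\<forall>i j. cinner (\<phi> i) (\<phi> j) = (if i = j then 1 else 0))"

definition tight_frame :: "('i \<Rightarrow> complex^'n) \<Rightarrow> 'i set \<Rightarrow> bool" where
  "tight_frame \<psi> I \<longleftrightarrow> (\<exists>A>0. \<forall>f. (\<Sum>k\<in>I. (cmod (cinner f (\<psi> k)))\<^sup>2) = A * (cnorm f)\<^sup>2)"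

end

theory Submission imports Defs begin

text \<open>
  Writing \<open>\<psi>\<^sub>i\<^sub>j = D\<^sub>i \<phi>\<^sub>j\<close>, one has \<open>\<langle>f, \<psi>\<^sub>i\<^sub>j\<rangle> = \<langle>D\<^sub>i f, \<phi>\<^sub>j\<rangle>\<close> since \<open>D\<^sub>i\<close> is
  real diagonal, so Parseval over \<open>j\<close> turns the frame sum into
  \<open>\<Sum>\<^sub>i \<parallel>D\<^sub>i f\<parallel>\<^sup>2 = \<Sum>\<^sub>k (\<Sum>\<^sub>i H\<^sub>t(k,i)\<^sup>2) |f\<^sub>k|\<^sup>2\<close>. The matrix \<open>H\<^sub>t = e\<^sup>-\<^sup>t\<^sup>L\<close> is invariant
  under every graph automorphism, so on a vertex-transitive graph all its rows
  have the same norm; that norm is positive because the rows sum to \<open>1\<close>,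
  \<open>L\<close> having zero row sums.
\<close>

lemma abs_mat_pow_nth_le:
  fixes A :: "real^'n::finite^'n"
  shows "\<bar>mat_pow A k $ i $ j\<bar> \<le> (\<Sum>a\<in>UNIV. \<Sum>b\<in>UNIV. \<bar>A $ a $ b\<bar>) ^ k"
proof (induction k arbitrary: i j)
  case 0
  then show ?case by (simp add: mat_def)
next
  case (Suc k)
  define m where "m = (\<Sum>a\<in>UNIV. \<Sum>b\<in>UNIV. \<bar>A $ a $ b\<bar>)"
  have "m \<ge> 0" unfolding m_def by (intro sum_nonneg) auto
  have row_le: "(\<Sum>l\<in>UNIV. \<bar>A $ i $ l\<bar>) \<le> m"
    unfolding m_def by (rule member_le_sum) (auto intro: sum_nonneg)
  have "\<bar>mat_pow A (Suc k) $ i $ j\<bar> = \<bar>\<Sum>l\<in>UNIV. A $ i $ l * mat_pow A k $ l $ j\<bar>"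
    by (simp add: matrix_matrix_mult_def)
  also have "\<dots> \<le> (\<Sum>l\<in>UNIV. \<bar>A $ i $ l\<bar> * m ^ k)"
    using Suc.IH unfolding m_def
    by (intro order_trans[OF sum_abs] sum_mono) (simp add: abs_mult mult_left_mono)
  also have "\<dots> = (\<Sum>l\<in>UNIV. \<bar>A $ i $ l\<bar>) * m ^ k"
    by (simp add: sum_distrib_right)
  also have "\<dots> \<le> m * m ^ k"
    using row_le \<open>m \<ge> 0\<close> by (intro mult_right_mono) auto
  finally show ?case by (simp add: m_def)
qed

lemma norm_mat_pow_le:
  fixes A :: "real^'n::finite^'n"
  shows "norm (mat_pow A k)
    \<le> (\<Sum>a\<in>UNIV. \<Sum>b\<in>UNIV. \<bar>A $ a $ b\<bar>) ^ k * norm (\<chi> (i::'n) (j::'n). (1::real))"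
proof -
  define m where "m = (\<Sum>a\<in>UNIV. \<Sum>b\<in>UNIV. \<bar>A $ a $ b\<bar>)"
  have "m \<ge> 0" unfolding m_def by (intro sum_nonneg) auto
  have entry_le: "\<bar>mat_pow A k $ i $ j\<bar> \<le> m ^ k" for i j
    unfolding m_def by (rule abs_mat_pow_nth_le)
  have "norm (mat_pow A k) \<le> norm (\<chi> (i::'n) (j::'n). m ^ k)"
    using entry_le \<open>m \<ge> 0\<close> by (intro norm_le_componentwise_cart) (simp add: norm_le_componentwise_cart)
  also have "(\<chi> (i::'n) (j::'n). m ^ k) = m ^ k *\<^sub>R (\<chi> (i::'n) (j::'n). (1::real))"
    by (simp add: vec_eq_iff)
  finally show ?thesis using \<open>m \<ge> 0\<close> by (simp add: m_def)
qed

lemma summable_mat_exp_series: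
  fixes A :: "real^'n::finite^'n"
  shows "summable (\<lambda>k. (1 / fact k) *\<^sub>R mat_pow A k)"
proof (rule summable_comparison_test')
  define m where "m = (\<Sum>a\<in>UNIV. \<Sum>b\<in>UNIV. \<bar>A $ a $ b\<bar>)"
  define c where "c = norm (\<chi> (i::'n) (j::'n). (1::real))"
  show "summable (\<lambda>k. c * (inverse (fact k) * m ^ k))"
    by (intro summable_mult summable_exp)
  show "norm ((1 / fact k) *\<^sub>R mat_pow A k) \<le> c * (inverse (fact k) * m ^ k)" for k
    using norm_mat_pow_le[of A k]
    by (simp add: m_def c_def divide_inverse mult_left_mono mult.commute mult.left_commute)
qed

lemma mat_exp_nth_sums:
  fixes A :: "real^'n::finite^'n"
  shows "(\<lambda>k. (1 / fact k) * mat_pow A k $ i $ j) sums (mat_exp A $ i $ j)"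
proof -
  have "(\<lambda>k. (1 / fact k) *\<^sub>R mat_pow A k) sums mat_exp A"
    unfolding mat_exp_def by (rule summable_sums[OF summable_mat_exp_series])
  then show ?thesis by (auto dest!: sums_vec_nth)
qed

lemma mat_pow_nth_bij_invariant:
  fixes A :: "real^'n::finite^'n"
  assumes "bij \<pi>" and "\<And>u v. A $ \<pi> u $ \<pi> v = A $ u $ v"
  shows "mat_pow A k $ \<pi> u $ \<pi> v = mat_pow A k $ u $ v"
proof (induction k arbitrary: u v)
  case 0
  have "\<pi> u = \<pi> v \<longleftrightarrow> u = v" using bij_is_inj[OF assms(1)] by (meson injD)
  then show ?case by (simp add: mat_def)
next
  case (Suc k)
  have "mat_pow A (Suc k) $ \<pi> u $ \<pi> v = (\<Sum>l\<in>UNIV. A $ \<pi> u $ l * mat_pow A k $ l $ \<pi> v)"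
    by (simp add: matrix_matrix_mult_def)
  also have "\<dots> = (\<Sum>l\<in>UNIV. A $ \<pi> u $ \<pi> l * mat_pow A k $ \<pi> l $ \<pi> v)"
    using assms(1) by (intro sum.reindex_bij_betw[symmetric]) (simp add: bij_betw_def bij_def)
  also have "\<dots> = mat_pow A (Suc k) $ u $ v"
    by (simp add: assms(2) Suc.IH matrix_matrix_mult_def)
  finally show ?case .
qed

lemma mat_exp_nth_bij_invariant:
  fixes A :: "real^'n::finite^'n"
  assumes "bij \<pi>" and "\<And>u v. A $ \<pi> u $ \<pi> v = A $ u $ v"
  shows "mat_exp A $ \<pi> u $ \<pi> v = mat_exp A $ u $ v"
proof (rule sums_unique2[OF mat_exp_nth_sums])
  show "(\<lambda>k. (1 / fact k) * mat_pow A k $ \<pi> u $ \<pi> v) sums (mat_exp A $ u $ v)"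
    using mat_exp_nth_sums[of A u v] by (simp add: mat_pow_nth_bij_invariant[OF assms])
qed

lemma mat_pow_row_sum:
  fixes A :: "real^'n::finite^'n"
  assumes "\<And>i. (\<Sum>j\<in>UNIV. A $ i $ j) = 0"
  shows "(\<Sum>j\<in>UNIV. mat_pow A k $ i $ j) = (if k = 0 then 1 else 0)"
proof (induction k arbitrary: i)
  case 0
  then show ?case by (simp add: mat_def)
next
  case (Suc k)
  have "(\<Sum>j\<in>UNIV. mat_pow A (Suc k) $ i $ j)
      = (\<Sum>j\<in>UNIV. \<Sum>l\<in>UNIV. A $ i $ l * mat_pow A k $ l $ j)"
    by (simp add: matrix_matrix_mult_def)
  also have "\<dots> = (\<Sum>l\<in>UNIV. A $ i $ l * (\<Sum>j\<in>UNIV. mat_pow A k $ l $ j))"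
    by (subst sum.swap) (simp add: sum_distrib_left)
  also have "\<dots> = (if k = 0 then (\<Sum>l\<in>UNIV. A $ i $ l) else 0)"
    by (simp add: Suc.IH)
  finally show ?case by (simp add: assms)
qed

lemma mat_exp_row_sum:
  fixes A :: "real^'n::finite^'n"
  assumes "\<And>i. (\<Sum>j\<in>UNIV. A $ i $ j) = 0"
  shows "(\<Sum>j\<in>UNIV. mat_exp A $ i $ j) = 1"
proof -
  have "(\<lambda>k. \<Sum>j\<in>UNIV. (1 / fact k) * mat_pow A k $ i $ j) sums (\<Sum>j\<in>UNIV. mat_exp A $ i $ j)"
    by (intro sums_sum mat_exp_nth_sums)
  moreover have "(\<Sum>j\<in>UNIV. (1 / fact k) * mat_pow A k $ i $ j) = (if k = 0 then 1 else 0)" for k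
    by (subst sum_distrib_left[symmetric]) (simp add: mat_pow_row_sum[OF assms])
  ultimately have "(\<lambda>k. if k = 0 then 1 else 0 :: real) sums (\<Sum>j\<in>UNIV. mat_exp A $ i $ j)"
    by simp
  then show ?thesis
    using sums_single[of 0 "\<lambda>_. 1::real"] by (simp add: sums_iff)
qed

lemma laplacian_nth_automorphism:
  assumes "graph_automorphism E \<pi>"
  shows "laplacian E $ \<pi> u $ \<pi> v = laplacian E $ u $ v"
proof -
  have "bij \<pi>" and edge_iff: "\<And>u v. E (\<pi> u) (\<pi> v) \<longleftrightarrow> E u v"
    using assms unfolding graph_automorphism_def by auto
  then have "{w. E (\<pi> u) w} = \<pi> ` {w. E u w}"
    by (auto simp: image_iff) (metis bij_inv_eq_iff)
  then have "card {w. E (\<pi> u) w} = card {w. E u w}"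
    using \<open>bij \<pi>\<close> by (metis bij_is_inj card_image inj_on_subset subset_UNIV)
  moreover have "\<pi> u = \<pi> v \<longleftrightarrow> u = v"
    using bij_is_inj[OF \<open>bij \<pi>\<close>] by (meson injD)
  ultimately show ?thesis
    by (cases "u = v") (simp_all add: laplacian_def deg_matrix_def adj_matrix_def edge_iff)
qed

lemma laplacian_row_sum: "(\<Sum>j\<in>UNIV. laplacian E $ i $ j) = 0"
  by (simp add: laplacian_def deg_matrix_def adj_matrix_def sum_subtractf sum.If_cases)

lemma heat_kernel_nth_automorphism:
  assumes "graph_automorphism E \<pi>"
  shows "heat_kernel E t $ \<pi> u $ \<pi> v = heat_kernel E t $ u $ v"
  unfolding heat_kernel_def
  using assms laplacian_nth_automorphism[OF assms]
  by (intro mat_exp_nth_bij_invariant) (auto simp: graph_automorphism_def)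

lemma heat_kernel_row_sum: "(\<Sum>j\<in>UNIV. heat_kernel E t $ i $ j) = 1"
  unfolding heat_kernel_def
  by (rule mat_exp_row_sum) (simp add: sum_negf sum_distrib_left[symmetric] laplacian_row_sum)

lemma heat_kernel_row_norm_pos: "0 < (\<Sum>j\<in>UNIV. (heat_kernel E t $ i $ j)\<^sup>2)"
proof -
  obtain j where "heat_kernel E t $ i $ j \<noteq> 0"
    using heat_kernel_row_sum[of E t i] by (metis sum.neutral zero_neq_one)
  then show ?thesis by (intro sum_pos2[of UNIV j]) auto
qed

lemma heat_kernel_row_norm_eq:
  assumes "vertex_transitive E"
  shows "(\<Sum>j\<in>UNIV. (heat_kernel E t $ u $ j)\<^sup>2) = (\<Sum>j\<in>UNIV. (heat_kernel E t $ v $ j)\<^sup>2)"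
proof -
  obtain \<pi> where \<pi>: "graph_automorphism E \<pi>" "\<pi> u = v"
    using assms unfolding vertex_transitive_def by blast
  then have "bij \<pi>" by (simp add: graph_automorphism_def)
  have "(\<Sum>j\<in>UNIV. (heat_kernel E t $ \<pi> u $ \<pi> j)\<^sup>2) = (\<Sum>j\<in>UNIV. (heat_kernel E t $ \<pi> u $ j)\<^sup>2)"
    using \<open>bij \<pi>\<close> by (intro sum.reindex_bij_betw) (simp add: bij_betw_def bij_def)
  then show ?thesis
    unfolding \<pi>(2)[symmetric] by (simp add: heat_kernel_nth_automorphism[OF \<pi>(1)])
qed

lemma orthonormal_basis_completeness:
  fixes \<phi> :: "'n::finite \<Rightarrow> complex^'n"
  assumes "orthonormal_basis \<phi>"
  shows "(\<Sum>j\<in>UNIV. \<phi> j $ l * cnj (\<phi> j $ k)) = (if l = k then 1 else 0)"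
proof -
  define U :: "complex^'n^'n" where "U = (\<chi> k j. \<phi> j $ k)"
  define V :: "complex^'n^'n" where "V = (\<chi> j k. cnj (\<phi> j $ k))"
  have "V ** U = mat 1"
    using assms unfolding orthonormal_basis_def cinner_def
    by (simp add: U_def V_def matrix_matrix_mult_def mat_def vec_eq_iff mult.commute)
  then have "U ** V = mat 1" by (simp add: matrix_left_right_inverse)
  then show ?thesis
    unfolding U_def V_def matrix_matrix_mult_def mat_def vec_eq_iff
    by (auto dest!: spec[of _ l] elim!: allE[of _ k])
qed

lemma parseval:
  fixes \<phi> :: "'n::finite \<Rightarrow> complex^'n"
  assumes "orthonormal_basis \<phi>"
  shows "(\<Sum>j\<in>UNIV. (cmod (cinner g (\<phi> j)))\<^sup>2) = (cnorm g)\<^sup>2"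
proof -
  have "complex_of_real (\<Sum>j\<in>UNIV. (cmod (cinner g (\<phi> j)))\<^sup>2)
      = (\<Sum>j\<in>UNIV. cinner g (\<phi> j) * cnj (cinner g (\<phi> j)))"
    by (simp only: of_real_sum complex_norm_square)
  also have "\<dots> = (\<Sum>j\<in>UNIV. \<Sum>l\<in>UNIV. \<Sum>k\<in>UNIV. g $ k * cnj (g $ l) * (\<phi> j $ l * cnj (\<phi> j $ k)))"
    unfolding cinner_def
    by (simp add: sum_product algebra_simps sum_distrib_left sum_distrib_right)
  also have "\<dots> = (\<Sum>l\<in>UNIV. \<Sum>k\<in>UNIV. \<Sum>j\<in>UNIV. g $ k * cnj (g $ l) * (\<phi> j $ l * cnj (\<phi> j $ k)))"
    by (subst sum.swap) (rule sum.cong[OF refl], rule sum.swap)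
  also have "\<dots> = (\<Sum>l\<in>UNIV. \<Sum>k\<in>UNIV. g $ k * cnj (g $ l) * (\<Sum>j\<in>UNIV. \<phi> j $ l * cnj (\<phi> j $ k)))"
    by (simp only: sum_distrib_left)
  also have "\<dots> = (\<Sum>k\<in>UNIV. g $ k * cnj (g $ k))"
    by (simp add: orthonormal_basis_completeness[OF assms] if_distrib cong: if_cong)
  also have "\<dots> = complex_of_real (\<Sum>k\<in>UNIV. (cmod (g $ k))\<^sup>2)"
    by (simp only: of_real_sum complex_norm_square)
  also have "\<dots> = complex_of_real ((cnorm g)\<^sup>2)"
    by (simp add: cnorm_def sum_nonneg)
  finally show ?thesis using of_real_eq_iff by blast
qed

lemma cinner_diag_right:
  "cinner f (cmat_vec (diag_vec x) g) = cinner (\<chi> k. complex_of_real (x $ k) * f $ k) g"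
proof -
  have "cmat_vec (diag_vec x) g $ k = complex_of_real (x $ k) * g $ k" for k
    unfolding cmat_vec_def diag_vec_def
    by (simp add: if_distrib[of complex_of_real] if_distrib[of "\<lambda>z. z * _"] cong: if_cong)
  then show ?thesis by (simp add: cinner_def mult_ac)
qed

lemma frame_sum_diag_columns:
  fixes H :: "real^'n::finite^'n"
  assumes "orthonormal_basis \<phi>"
  shows "(\<Sum>(i, j)\<in>UNIV. (cmod (cinner f (cmat_vec (diag_vec (column H i)) (\<phi> j))))\<^sup>2)
    = (\<Sum>k\<in>UNIV. (\<Sum>i\<in>UNIV. (H $ k $ i)\<^sup>2) * (cmod (f $ k))\<^sup>2)"
proof -
  have "(\<Sum>(i, j)\<in>UNIV. (cmod (cinner f (cmat_vec (diag_vec (column H i)) (\<phi> j))))\<^sup>2)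
      = (\<Sum>i\<in>UNIV. \<Sum>j\<in>UNIV. (cmod (cinner (\<chi> k. complex_of_real (H $ k $ i) * f $ k) (\<phi> j)))\<^sup>2)"
    by (simp add: cinner_diag_right column_def sum.cartesian_product)
  also have "\<dots> = (\<Sum>i\<in>UNIV. \<Sum>k\<in>UNIV. (H $ k $ i)\<^sup>2 * (cmod (f $ k))\<^sup>2)"
    by (simp add: parseval[OF assms] cnorm_def sum_nonneg norm_mult power_mult_distrib)
  also have "\<dots> = (\<Sum>k\<in>UNIV. (\<Sum>i\<in>UNIV. (H $ k $ i)\<^sup>2) * (cmod (f $ k))\<^sup>2)"
    by (subst sum.swap) (simp add: sum_distrib_right)
  finally show ?thesis .
qed

lemma tight_frame_diag_columns:
  fixes H :: "real^'n::finite^'n"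
  assumes "orthonormal_basis \<phi>"
    and "r > 0" and "\<And>k. (\<Sum>i\<in>UNIV. (H $ k $ i)\<^sup>2) = r"
  shows "tight_frame (\<lambda>(i, j). cmat_vec (diag_vec (column H i)) (\<phi> j)) UNIV"
  unfolding tight_frame_def
proof (intro exI conjI allI)
  fix f :: "complex^'n"
  have "(\<Sum>p\<in>UNIV. (cmod (cinner f ((\<lambda>(i, j). cmat_vec (diag_vec (column H i)) (\<phi> j)) p)))\<^sup>2)
      = (\<Sum>k\<in>UNIV. r * (cmod (f $ k))\<^sup>2)" (is "?frame_sum = _")
    using frame_sum_diag_columns[OF assms(1), where H = H and f = f] by (simp add: assms(3) split_def)
  also have "\<dots> = r * (cnorm f)\<^sup>2"
    by (simp add: cnorm_def sum_nonneg sum_distrib_left)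
  finally show "?frame_sum = r * (cnorm f)\<^sup>2" .
qed (fact assms(2))

theorem theorem4p2:
  fixes E :: "'n::finite \<Rightarrow> 'n \<Rightarrow> bool"
    and \<phi> :: "'n \<Rightarrow> complex^'n"
    and t :: real
  assumes "simple_graph E"
    and "graph_connected E"
    and "vertex_transitive E"
    and "orthonormal_basis \<phi>"
    and "\<forall>j. \<exists>\<mu>::complex. cmat_vec (laplacian E) (\<phi> j) = \<mu> *s \<phi> j"
    and "t \<ge> 0"
  shows "tight_frame
           (\<lambda>(i, j). cmat_vec (diag_vec (column (heat_kernel E t) i)) (\<phi> j))
           (UNIV :: ('n \<times> 'n) set)"
proof -
  fix v :: 'n
  show ?thesis
  proof (rule tight_frame_diag_columns[OF assms(4)])
    show "0 < (\<Sum>i\<in>UNIV. (heat_kernel E t $ v $ i)\<^sup>2)"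
      by (rule heat_kernel_row_norm_pos)
    show "(\<Sum>i\<in>UNIV. (heat_kernel E t $ k $ i)\<^sup>2) = (\<Sum>i\<in>UNIV. (heat_kernel E t $ v $ i)\<^sup>2)" for k
      using assms(3) by (rule heat_kernel_row_norm_eq)
  qed
qed

end
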